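(* Let $(X,d)$ be a separable complete metric space, $(\Omega,\mathsf{F},\mathbb{P})$ a probability space, $F:X\to[0,\infty]$ measurable with $\mathrm{zer}F:=\{z\in X\mid F(z)=0\}$ closed and non-empty, and $\phi:X\times X\to[0,\infty)$ a Carath\'eodory distance. Let $\tau:[0,\infty)\to[0,\infty)$ be convex and nondecreasing with $\tau(0)=0$ and $\tau(\varepsilon)>0$ for all $\varepsilon>0$, and let $D$ be a collection of $X$-valued random variables such that $\mathrm{dist}^\phi_{\mathrm{zer}F}(x)$ is integrable for all $x\in D$. If $\tau$ (restricted to $(0,\infty)$) is a modulus of $\phi$-regularity for $F$, then it is also a modulus of $\phi$-regularity for $F$ in mean w.r.t.\ $D$.
   Context: A Carath\'eodory distance is a function $\phi:X\times X\to[0,\infty)$ continuous in its left argument and Borel measurable in its right argument; $\mathrm{dist}^\phi_S(x):=\inf_{s\in S}\phi(s,x)$. A modulus of $\phi$-regularity for $F$ is a function $\tau:(0,\infty)\to(0,\infty)$ such that for all $\varepsilon>0$ and $x\in X$, $F(x)<\tau(\varepsilon)$ implies $\mathrm{dist}^\phi_{\mathrm{zer}F}(x)<\varepsilon$. A modulus of $\phi$-regularity for $F$ in mean w.r.t.\ $D$ is a function $\tau:(0,\infty)\to(0,\infty)$ such that for all $\varepsilon>0$ and $x\in D$, $\mathbb{E}[F(x)]<\tau(\varepsilon)$ implies $\mathbb{E}[\mathrm{dist}^\phi_{\mathrm{zer}F}(x)]<\varepsilon$. *)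

theory Defs
  imports "HOL-Probability.Probability"
begin

definition caratheodory_distance :: "('a::metric_space \<Rightarrow> 'a \<Rightarrow> real) \<Rightarrow> bool" where
  "caratheodory_distance \<phi> \<longleftrightarrow>
     (\<forall>s x. 0 \<le> \<phi> s x) \<and>
     (\<forall>x. continuous_on UNIV (\<lambda>s. \<phi> s x)) \<and>
     (\<forall>s. (\<lambda>x. \<phi> s x) \<in> borel_measurable borel)"

definition dist_phi :: "('a \<Rightarrow> 'a \<Rightarrow> real) \<Rightarrow> 'a set \<Rightarrow> 'a \<Rightarrow> real" where
  "dist_phi \<phi> S x = (INF s\<in>S. \<phi> s x)"

definition zer :: "('a \<Rightarrow> ennreal) \<Rightarrow> 'a set" where
  "zer F = {z. F z = 0}"

definition modulus_regularity ::
  "('a \<Rightarrow> 'a \<Rightarrow> real) \<Rightarrow> ('a \<Rightarrow> ennreal) \<Rightarrow> (real \<Rightarrow> real) \<Rightarrow> bool" where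
  "modulus_regularity \<phi> F \<tau> \<longleftrightarrow>
     (\<forall>\<epsilon>>0. \<tau> \<epsilon> > 0) \<and>
     (\<forall>\<epsilon>>0. \<forall>x. F x < ennreal (\<tau> \<epsilon>) \<longrightarrow> dist_phi \<phi> (zer F) x < \<epsilon>)"

text \<open>E[F(x)] is the nonnegative integral (F is [0,inf]-valued),
  E[dist] is the Lebesgue integral (dist is assumed integrable on D).\<close>
definition modulus_regularity_mean ::
  "'b measure \<Rightarrow> ('a \<Rightarrow> 'a \<Rightarrow> real) \<Rightarrow> ('a \<Rightarrow> ennreal) \<Rightarrow> (real \<Rightarrow> real)
     \<Rightarrow> ('b \<Rightarrow> 'a) set \<Rightarrow> bool" where
  "modulus_regularity_mean M \<phi> F \<tau> D \<longleftrightarrow>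
     (\<forall>\<epsilon>>0. \<tau> \<epsilon> > 0) \<and>
     (\<forall>\<epsilon>>0. \<forall>x\<in>D. (\<integral>\<^sup>+ \<omega>. F (x \<omega>) \<partial>M) < ennreal (\<tau> \<epsilon>) \<longrightarrow>
        (\<integral> \<omega>. dist_phi \<phi> (zer F) (x \<omega>) \<partial>M) < \<epsilon>)"

end

theory Submission
  imports Defs
begin

text \<open>Regularity gives \<open>\<tau> (dist_phi \<phi> (zer F) y) \<le> F y\<close> pointwise. Taking
  expectations and applying Jensen's inequality to the convex \<open>\<tau>\<close> yields
  \<open>\<tau> (E dist) \<le> E \<tau>(dist) \<le> E F < \<tau> \<epsilon>\<close>, and monotonicity of \<open>\<tau>\<close> turns this into
  \<open>E dist < \<epsilon>\<close>.\<close>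

lemma dist_phi_nonneg:
  assumes "\<forall>s x. 0 \<le> \<phi> s x" and "S \<noteq> {}"
  shows "0 \<le> dist_phi \<phi> S x"
  unfolding dist_phi_def using assms by (intro cINF_greatest) auto

lemma modulus_regularity_le:
  assumes "modulus_regularity \<phi> F \<tau>" and "\<tau> 0 = 0" and "0 \<le> dist_phi \<phi> (zer F) y"
  shows "ennreal (\<tau> (dist_phi \<phi> (zer F) y)) \<le> F y"
proof (cases "dist_phi \<phi> (zer F) y = 0")
  case True
  then show ?thesis using assms(2) by simp
next
  case False
  with assms(3) have "0 < dist_phi \<phi> (zer F) y" by simp
  with assms(1) show ?thesis
    unfolding modulus_regularity_def by (meson less_irrefl not_le)
qed

lemma convex_on_comp_max_zero:
  fixes f :: "real \<Rightarrow> real"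
  assumes convex: "convex_on {0..} f" and mono: "mono_on {0..} f"
  shows "convex_on UNIV (\<lambda>t. f (max 0 t))"
proof (rule convex_onI)
  fix t x y :: real
  assume t: "0 < t" "t < 1"
  have "max 0 ((1 - t) * x + t * y) \<le> (1 - t) * max 0 x + t * max 0 y"
    using t mult_left_mono[of x "max 0 x" "1 - t"] mult_left_mono[of y "max 0 y" t]
    by (simp add: add_mono)
  then have "f (max 0 ((1 - t) * x + t * y)) \<le> f ((1 - t) * max 0 x + t * max 0 y)"
    using t by (intro mono_onD[OF mono]) auto
  also have "\<dots> \<le> (1 - t) * f (max 0 x) + t * f (max 0 y)"
    using convex_onD[OF convex, of t "max 0 x" "max 0 y"] t by (simp add: algebra_simps)
  finally show "f (max 0 ((1 - t) *\<^sub>R x + t *\<^sub>R y)) \<le> (1 - t) * f (max 0 x) + t * f (max 0 y)"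
    by simp
qed simp

lemma borel_measurable_mono_on_comp:
  fixes f :: "real \<Rightarrow> real"
  assumes "mono_on A f" and "X \<in> borel_measurable M" and "\<forall>\<omega>\<in>space M. X \<omega> \<in> A"
  shows "(\<lambda>\<omega>. f (X \<omega>)) \<in> borel_measurable M"
  using measurable_compose[OF measurable_restrict_space2 borel_measurable_mono_on_fnc] assms
  by blast

lemma integral_less_if_nn_integral_less:
  fixes g :: "'b \<Rightarrow> real"
  assumes "g \<in> borel_measurable M" and "\<forall>\<omega>. 0 \<le> g \<omega>"
    and less: "(\<integral>\<^sup>+ \<omega>. ennreal (g \<omega>) \<partial>M) < ennreal c"
  shows "integrable M g" and "integral\<^sup>L M g < c"
proof -
  show int: "integrable M g"
    using assms less_trans[OF less ennreal_less_top] by (intro integrableI_bounded) auto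
  have "ennreal (integral\<^sup>L M g) < ennreal c"
    using less nn_integral_eq_integral[OF int] assms(2) by simp
  then show "integral\<^sup>L M g < c"
    using assms(2) by (simp add: ennreal_less_iff integral_nonneg_AE)
qed

text \<open>Jensen's inequality in the library needs an open domain, so \<open>f\<close> is first extended to
  all of \<open>\<real>\<close> by \<open>f (max 0 t)\<close>; this keeps convexity because \<open>f\<close> is nondecreasing.\<close>

lemma (in prob_space) jensens_inequality_mono_nonneg:
  fixes f :: "real \<Rightarrow> real"
  assumes X: "integrable M X" "\<forall>\<omega>. 0 \<le> X \<omega>"
    and f: "convex_on {0..} f" "mono_on {0..} f" "integrable M (\<lambda>\<omega>. f (X \<omega>))"
  shows "f (expectation X) \<le> expectation (\<lambda>\<omega>. f (X \<omega>))"
proof -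
  have ext_eq: "(\<lambda>\<omega>. f (max 0 (X \<omega>))) = (\<lambda>\<omega>. f (X \<omega>))"
    using X(2) by (simp add: max_absorb2)
  have "f (max 0 (expectation X)) \<le> expectation (\<lambda>\<omega>. f (max 0 (X \<omega>)))"
    by (rule jensens_inequality[where I = UNIV])
      (use X f ext_eq convex_on_comp_max_zero[OF f(1,2)] in auto)
  moreover have "0 \<le> expectation X"
    using X(2) by (simp add: integral_nonneg_AE)
  ultimately show ?thesis
    by (simp add: ext_eq max_absorb2)
qed

lemma (in prob_space) expectation_less_if_nn_integral_comp_less:
  fixes f :: "real \<Rightarrow> real"
  assumes X: "integrable M X" "\<forall>\<omega>. 0 \<le> X \<omega>"
    and f: "convex_on {0..} f" "mono_on {0..} f" "0 \<le> f 0"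
    and less: "(\<integral>\<^sup>+ \<omega>. ennreal (f (X \<omega>)) \<partial>M) < ennreal (f \<epsilon>)" and "0 \<le> \<epsilon>"
  shows "expectation X < \<epsilon>"
proof -
  have f_X_nonneg: "\<forall>\<omega>. 0 \<le> f (X \<omega>)"
    using X(2) f(3) order_trans mono_onD[OF f(2)] by (metis atLeast_iff order_refl)
  have f_X_meas: "(\<lambda>\<omega>. f (X \<omega>)) \<in> borel_measurable M"
    using X by (intro borel_measurable_mono_on_comp[OF f(2)]) auto
  note f_X = integral_less_if_nn_integral_less[OF f_X_meas f_X_nonneg less]
  have "f (expectation X) \<le> expectation (\<lambda>\<omega>. f (X \<omega>))"
    by (rule jensens_inequality_mono_nonneg[OF X f(1,2) f_X(1)])
  also have "\<dots> < f \<epsilon>"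
    by (rule f_X(2))
  finally have "f (expectation X) < f \<epsilon>" .
  then show ?thesis
    using \<open>0 \<le> \<epsilon>\<close> mono_onD[OF f(2), of \<epsilon> "expectation X"] by fastforce
qed

theorem lemma3p8:
  fixes M :: "'b measure"
    and F :: "'a::polish_space \<Rightarrow> ennreal"
    and \<phi> :: "'a \<Rightarrow> 'a \<Rightarrow> real"
    and \<tau> :: "real \<Rightarrow> real"
    and D :: "('b \<Rightarrow> 'a) set"
  assumes "prob_space M"
    and "F \<in> borel_measurable borel"
    and "closed (zer F)" and "zer F \<noteq> {}"
    and "caratheodory_distance \<phi>"
    and "convex_on {0..} \<tau>" and "mono_on {0..} \<tau>"
    and "\<tau> 0 = 0" and "\<forall>\<epsilon>>0. \<tau> \<epsilon> > 0"
    and "\<forall>x\<in>D. x \<in> measurable M borel"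
    and "\<forall>x\<in>D. integrable M (\<lambda>\<omega>. dist_phi \<phi> (zer F) (x \<omega>))"
    and "modulus_regularity \<phi> F \<tau>"
  shows "modulus_regularity_mean M \<phi> F \<tau> D"
proof -
  interpret prob_space M by fact
  have dist_nonneg: "0 \<le> dist_phi \<phi> (zer F) y" for y
    using assms(4,5) by (intro dist_phi_nonneg) (auto simp: caratheodory_distance_def)
  have tau_le_F: "ennreal (\<tau> (dist_phi \<phi> (zer F) y)) \<le> F y" for y
    using modulus_regularity_le[OF assms(12,8) dist_nonneg] .
  show ?thesis
    unfolding modulus_regularity_mean_def
  proof (intro conjI allI impI ballI)
    fix \<epsilon> :: real and x
    assume "0 < \<epsilon>" and "x \<in> D" and less: "(\<integral>\<^sup>+ \<omega>. F (x \<omega>) \<partial>M) < ennreal (\<tau> \<epsilon>)"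
    have "(\<integral>\<^sup>+ \<omega>. ennreal (\<tau> (dist_phi \<phi> (zer F) (x \<omega>))) \<partial>M) < ennreal (\<tau> \<epsilon>)"
      using le_less_trans[OF nn_integral_mono[OF tau_le_F] less] .
    with \<open>x \<in> D\<close> \<open>0 < \<epsilon>\<close> show "expectation (\<lambda>\<omega>. dist_phi \<phi> (zer F) (x \<omega>)) < \<epsilon>"
      using assms(6-8,11) dist_nonneg
      by (intro expectation_less_if_nn_integral_comp_less) auto
  qed (use assms(9) in blast)
qed

end
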